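(* Let $G$ be a locally compact second countable group, $\rho_0,\rho_1:G\to\mathrm{Homeo}^+(S^1)$ continuous actions, and $\varphi:S^1\to S^1$ a covering map of degree $k$ such that $\rho_0(g)\varphi=\varphi\rho_1(g)$ for all $g\in G$. Then $\rho_0^*(e^b)=k\,\rho_1^*(e^b)$ in $H^2_{bc}(G,\mathbb Z)$.
   Context: $S^1=\mathbb Z\backslash\mathbb R$. For $f\in\mathrm{Homeo}^+(S^1)$ let $\bar f$ be its lift with $\bar f(0)\in[0,1)$, $T(x)=x+1$, and define the Euler cocycle $c(f,g)\in\{0,1\}$ by $\overline{fg}\,T^{c(f,g)}=\bar f\bar g$. $H^2_{bc}(G,\mathbb Z)$ is the cohomology of $G$ computed with bounded Borel $\mathbb Z$-valued cochains, and for a continuous action $\rho$, $\rho^*(e^b)\in H^2_{bc}(G,\mathbb Z)$ is the class of the bounded Borel cocycle $(g,h)\mapsto c(\rho(g),\rho(h))$. *)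

theory Defs
  imports "HOL-Analysis.Analysis"
begin

text \<open>The circle S^1 = Z\R, realised as the unit circle in the complex plane;
  the covering projection R -> S^1 is x |-> exp(2 pi i x).\<close>

abbreviation S1 :: "complex set" where "S1 \<equiv> sphere 0 1"

definition ecirc :: "real \<Rightarrow> complex" where
  "ecirc x = cis (2 * pi * x)"

definition circle_degree :: "(complex \<Rightarrow> complex) \<Rightarrow> int" where
  "circle_degree f = (THE k::int. \<exists>F. continuous_on UNIV F \<and>
      (\<forall>x. f (ecirc x) = ecirc (F x)) \<and> (\<forall>x. F (x + 1) = F x + of_int k))"

definition homeo_plus :: "(complex \<Rightarrow> complex) \<Rightarrow> bool" where
  "homeo_plus f \<longleftrightarrow> (\<exists>f'. homeomorphism S1 S1 f f') \<and> circle_degree f = 1"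

definition circle_lift :: "(complex \<Rightarrow> complex) \<Rightarrow> real \<Rightarrow> real" where
  "circle_lift f = (THE F. continuous_on UNIV F \<and>
      (\<forall>x. f (ecirc x) = ecirc (F x)) \<and> 0 \<le> F 0 \<and> F 0 < 1)"

definition euler_cocycle :: "(complex \<Rightarrow> complex) \<Rightarrow> (complex \<Rightarrow> complex) \<Rightarrow> int" where
  "euler_cocycle f g = (THE c::int. \<forall>x.
      circle_lift (f \<circ> g) (x + of_int c) = circle_lift f (circle_lift g x))"

text \<open>Continuous action of the topological group G (written additively) on S^1
  by orientation preserving homeomorphisms.\<close>
definition cont_action :: "('g::topological_group_add \<Rightarrow> complex \<Rightarrow> complex) \<Rightarrow> bool" where
  "cont_action \<rho> \<longleftrightarrow> (\<forall>g. homeo_plus (\<rho> g)) \<and>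
     (\<forall>g h. \<forall>x\<in>S1. \<rho> (g + h) x = \<rho> g (\<rho> h x)) \<and>
     continuous_on (UNIV \<times> S1) (\<lambda>(g, x). \<rho> g x)"

definition bounded_borel_int :: "('g::topological_space \<Rightarrow> int) \<Rightarrow> bool" where
  "bounded_borel_int b \<longleftrightarrow> (\<lambda>g. real_of_int (b g)) \<in> borel_measurable borel \<and>
     (\<exists>B. \<forall>g. \<bar>b g\<bar> \<le> B)"

text \<open>Equality of the classes of two 2-cocycles in H^2_bc(G,Z): their difference
  is the coboundary (delta b)(g,h) = b(g) + b(h) - b(gh) of a bounded Borel 1-cochain.\<close>
definition same_bc_class :: "('g::topological_group_add \<Rightarrow> 'g \<Rightarrow> int) \<Rightarrow> ('g \<Rightarrow> 'g \<Rightarrow> int) \<Rightarrow> bool" where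
  "same_bc_class c c' \<longleftrightarrow> (\<exists>b. bounded_borel_int b \<and>
     (\<forall>g h. c g h - c' g h = b g + b h - b (g + h)))"

text \<open>rho^*(e^b) is represented by (g,h) |-> c(rho g, rho h).\<close>
definition pullback_euler :: "('g \<Rightarrow> complex \<Rightarrow> complex) \<Rightarrow> 'g \<Rightarrow> 'g \<Rightarrow> int" where
  "pullback_euler \<rho> g h = euler_cocycle (\<rho> g) (\<rho> h)"

end

theory Submission
  imports Defs
begin

text \<open>Write \<open>\<Phi>\<close>, \<open>R\<^sub>0(g)\<close>, \<open>R\<^sub>1(g)\<close> for the canonical lifts of \<open>\<phi>\<close>, \<open>\<rho>\<^sub>0(g)\<close>, \<open>\<rho>\<^sub>1(g)\<close>;
  then \<open>\<Phi>(x + n) = \<Phi>(x) + k n\<close>. Since \<open>\<rho>\<^sub>0(g) \<phi> = \<phi> \<rho>\<^sub>1(g)\<close>, the maps \<open>R\<^sub>0(g) \<circ> \<Phi>\<close> and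
  \<open>\<Phi> \<circ> R\<^sub>1(g)\<close> lift the same circle map and therefore differ by an integer constant \<open>b(g)\<close>.
  Evaluating \<open>R\<^sub>0(g) R\<^sub>0(h) \<Phi>\<close> in two ways, once through the Euler cocycle of \<open>\<rho>\<^sub>0\<close> and
  once through that of \<open>\<rho>\<^sub>1\<close> (whose translation by \<open>c\<^sub>1(g,h)\<close> becomes a translation by
  \<open>k c\<^sub>1(g,h)\<close> when pushed through \<open>\<Phi>\<close>), gives \<open>c\<^sub>0(g,h) - k c\<^sub>1(g,h) = b(g) + b(h) - b(gh)\<close>.
  The cochain \<open>b\<close> is bounded because canonical lifts of orientation preserving
  homeomorphisms map \<open>[0,1)\<close> into \<open>[0,2)\<close>, and it is Borel because it can be written
  through the arguments of \<open>\<rho>\<^sub>i(g)(z)\<close> at two fixed points \<open>z\<close>.\<close>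

lemma ecirc_exp: "ecirc x = exp (\<i> * of_real (2 * pi * x))"
  by (simp add: ecirc_def cis_conv_exp)

lemma ecirc_in_S1 [simp]: "ecirc x \<in> S1"
  by (simp add: ecirc_def)

lemma ecirc_0 [simp]: "ecirc 0 = 1"
  by (simp add: ecirc_def)

lemma continuous_on_ecirc: "continuous_on UNIV ecirc"
  unfolding ecirc_exp[abs_def] by (intro continuous_intros)

lemma ecirc_eq_iff: "ecirc a = ecirc b \<longleftrightarrow> (\<exists>n::int. a = b + of_int n)"
proof -
  have "\<i> * of_real (2 * pi * a) = \<i> * of_real (2 * pi * b) + (of_int (2 * n) * pi) * \<i>
        \<longleftrightarrow> a = b + of_int n" for n :: int
  proof -
    have "\<i> * of_real (2 * pi * a) = \<i> * of_real (2 * pi * b) + (of_int (2 * n) * pi) * \<i>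
          \<longleftrightarrow> complex_of_real (2 * pi * a) * \<i> = complex_of_real (2 * pi * (b + of_int n)) * \<i>"
      by (simp add: algebra_simps)
    also have "\<dots> \<longleftrightarrow> 2 * pi * a = 2 * pi * (b + of_int n)"
      by (metis complex_i_not_zero mult_cancel_right of_real_eq_iff)
    finally show ?thesis
      using pi_gt_zero by simp
  qed
  then show ?thesis
    unfolding ecirc_exp exp_eq by blast
qed

lemma ecirc_add_of_int [simp]: "ecirc (x + of_int n) = ecirc x"
  using ecirc_eq_iff by blast

definition circle_map :: "(complex \<Rightarrow> complex) \<Rightarrow> bool" where
  "circle_map f \<longleftrightarrow> continuous_on S1 f \<and> f ` S1 \<subseteq> S1"

definition is_lift :: "(complex \<Rightarrow> complex) \<Rightarrow> (real \<Rightarrow> real) \<Rightarrow> bool" where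
  "is_lift f F \<longleftrightarrow> continuous_on UNIV F \<and> (\<forall>x. f (ecirc x) = ecirc (F x))"

lemma continuous_int_valued_constant:
  fixes h :: "real \<Rightarrow> real"
  assumes "continuous_on UNIV h" and "\<And>x. \<exists>n::int. h x = of_int n"
  shows "\<exists>n::int. \<forall>x. h x = of_int n"
proof -
  have "h constant_on UNIV"
  proof (rule continuous_discrete_range_constant[OF connected_UNIV assms(1)])
    fix x :: real
    show "\<exists>e>0. \<forall>y. y \<in> UNIV \<and> h y \<noteq> h x \<longrightarrow> e \<le> norm (h y - h x)"
    proof (intro exI[of _ 1] conjI allI impI)
      fix y
      assume "y \<in> UNIV \<and> h y \<noteq> h x"
      moreover obtain n m :: int where "h x = n" "h y = m"
        using assms(2) by metis
      ultimately have "1 \<le> \<bar>m - n\<bar>" "h x = n" "h y = m"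
        by auto
      then show "1 \<le> norm (h y - h x)"
        by (metis of_int_1_le_iff of_int_abs of_int_diff real_norm_def)
    qed simp
  qed
  then show ?thesis
    using assms(2)[of 0] unfolding constant_on_def by (metis UNIV_I)
qed

lemma is_lift_unique_up_to_int:
  assumes "is_lift f F" and "is_lift f G"
  obtains n :: int where "\<And>x. G x = F x + of_int n"
proof -
  have "\<exists>n::int. \<forall>x. G x - F x = of_int n"
  proof (rule continuous_int_valued_constant)
    show "continuous_on UNIV (\<lambda>x. G x - F x)"
      using assms unfolding is_lift_def by (intro continuous_intros) auto
    fix x
    have "ecirc (G x) = ecirc (F x)"
      using assms unfolding is_lift_def by metis
    then show "\<exists>n::int. G x - F x = of_int n"
      unfolding ecirc_eq_iff by force
  qed
  then show thesis
    using that by (metis add.commute diff_eq_eq)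
qed

lemma is_lift_comp:
  assumes "is_lift f F" and "is_lift g G" and "\<And>z. z \<in> S1 \<Longrightarrow> h z = f (g z)"
  shows "is_lift h (\<lambda>x. F (G x))"
  using assms continuous_on_compose2[of UNIV F UNIV G]
  unfolding is_lift_def by (metis ecirc_in_S1 subset_UNIV)

lemma is_lift_add_of_int:
  assumes "is_lift f F"
  shows "is_lift f (\<lambda>x. F x + of_int n)"
  using assms unfolding is_lift_def by (auto intro!: continuous_intros)

lemma circle_map_has_lift:
  assumes "circle_map f"
  obtains F where "is_lift f F"
proof -
  have cont: "continuous_on UNIV (\<lambda>x. f (ecirc x))"
    using assms continuous_on_ecirc unfolding circle_map_def
    by (metis continuous_on_compose2 ecirc_in_S1 image_subset_iff)
  have norm1: "norm (f (ecirc x)) = 1" for x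
    using assms ecirc_in_S1 unfolding circle_map_def by (metis image_subset_iff mem_sphere_0)
  then obtain g where g: "continuous_on UNIV g" "\<And>x. f (ecirc x) = exp (g x)"
    using continuous_logarithm_on_contractible[OF cont contractible_UNIV]
    by (metis UNIV_I norm_zero zero_neq_one)
  have "g x = \<i> * of_real (Im (g x))" for x
    using norm1[of x] g(2)[of x] by (simp add: norm_exp_eq_Re complex_eq_iff)
  then have "f (ecirc x) = ecirc (Im (g x) / (2 * pi))" for x
    using g(2)[of x] by (simp add: ecirc_exp)
  moreover have "continuous_on UNIV (\<lambda>x. Im (g x) / (2 * pi))"
    using g(1) by (intro continuous_intros) auto
  ultimately show thesis
    using that unfolding is_lift_def by blast
qed

lemma add_of_int_from_add_one:
  fixes F :: "real \<Rightarrow> real"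
  assumes "\<And>x. F (x + 1) = F x + of_int d"
  shows "F (x + of_int c) = F x + of_int d * of_int c"
proof -
  have nat: "F (y + real n) = F y + of_int d * real n" for y n
  proof (induction n)
    case (Suc n)
    have "F (y + real (Suc n)) = F (y + real n) + of_int d"
      using assms[of "y + real n"] by (simp add: algebra_simps)
    with Suc.IH show ?case
      by (simp add: algebra_simps)
  qed simp
  show ?thesis
  proof (cases "c \<ge> 0")
    case True
    then show ?thesis
      using nat[of x "nat c"] by simp
  next
    case False
    then show ?thesis
      using nat[of "x + of_int c" "nat (- c)"] by simp
  qed
qed

lemma is_lift_add_one:
  assumes "is_lift f F"
  shows "F (x + 1) = F x + of_int (circle_degree f)"
proof -
  have "\<exists>d::int. \<forall>x. F (x + 1) - F x = of_int d"
  proof (rule continuous_int_valued_constant)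
    have "continuous_on UNIV F"
      using assms is_lift_def by blast
    moreover have "continuous_on UNIV (\<lambda>x. F (x + 1))"
      using calculation by (rule continuous_on_compose2) (auto intro: continuous_intros)
    ultimately show "continuous_on UNIV (\<lambda>x. F (x + 1) - F x)"
      by (intro continuous_intros)
    fix x
    have "ecirc (F (x + 1)) = ecirc (F x)"
      using assms ecirc_add_of_int[of x 1] unfolding is_lift_def by (metis of_int_1)
    then show "\<exists>d::int. F (x + 1) - F x = of_int d"
      unfolding ecirc_eq_iff by force
  qed
  then obtain d :: int where d: "\<And>x. F (x + 1) = F x + of_int d"
    by (metis add.commute diff_eq_eq)
  have "circle_degree f = d"
    unfolding circle_degree_def
  proof (rule the_equality)
    show "\<exists>F. continuous_on UNIV F \<and> (\<forall>x. f (ecirc x) = ecirc (F x)) \<and> (\<forall>x. F (x + 1) = F x + of_int d)"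
      using assms d unfolding is_lift_def by blast
  next
    fix k :: int
    assume "\<exists>G. continuous_on UNIV G \<and> (\<forall>x. f (ecirc x) = ecirc (G x)) \<and> (\<forall>x. G (x + 1) = G x + of_int k)"
    then obtain G where G: "is_lift f G" "\<And>x. G (x + 1) = G x + of_int k"
      unfolding is_lift_def by blast
    obtain n :: int where "\<And>x. G x = F x + of_int n"
      using is_lift_unique_up_to_int[OF assms G(1)] by blast
    then show "k = d"
      using G(2)[of 0] d[of 0] by simp
  qed
  then show ?thesis
    using d by simp
qed

lemma is_lift_add_of_int_arg:
  assumes "is_lift f F"
  shows "F (x + of_int c) = F x + of_int (circle_degree f) * of_int c"
  using add_of_int_from_add_one is_lift_add_one[OF assms] by blast

lemma circle_lift_eqI:
  assumes "is_lift f F" and "0 \<le> F 0" and "F 0 < 1"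
  shows "circle_lift f = F"
  unfolding circle_lift_def
proof (rule the_equality)
  show "continuous_on UNIV F \<and> (\<forall>x. f (ecirc x) = ecirc (F x)) \<and> 0 \<le> F 0 \<and> F 0 < 1"
    using assms is_lift_def by blast
next
  fix G
  assume "continuous_on UNIV G \<and> (\<forall>x. f (ecirc x) = ecirc (G x)) \<and> 0 \<le> G 0 \<and> G 0 < 1"
  then have G: "is_lift f G" "0 \<le> G 0" "G 0 < 1"
    unfolding is_lift_def by auto
  obtain n :: int where n: "\<And>x. G x = F x + of_int n"
    using is_lift_unique_up_to_int[OF assms(1) G(1)] by blast
  have "n = 0"
    using n[of 0] G(2,3) assms(2,3) by linarith
  then show "G = F"
    using n by auto
qed

lemma circle_lift_props:
  assumes "circle_map f"
  shows "is_lift f (circle_lift f)" and "0 \<le> circle_lift f 0" and "circle_lift f 0 < 1"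
proof -
  obtain F where "is_lift f F"
    using circle_map_has_lift[OF assms] .
  then have F: "is_lift f (\<lambda>x. F x + of_int (- \<lfloor>F 0\<rfloor>))"
    by (rule is_lift_add_of_int)
  moreover have "0 \<le> F 0 + of_int (- \<lfloor>F 0\<rfloor>)" "F 0 + of_int (- \<lfloor>F 0\<rfloor>) < 1"
    by linarith+
  ultimately have "circle_lift f = (\<lambda>x. F x + of_int (- \<lfloor>F 0\<rfloor>))"
    by (rule circle_lift_eqI)
  with F show "is_lift f (circle_lift f)" "0 \<le> circle_lift f 0" "circle_lift f 0 < 1"
    by (simp_all, linarith+)
qed

lemma circle_lift_cong:
  assumes "\<And>z. z \<in> S1 \<Longrightarrow> f z = h z"
  shows "circle_lift f = circle_lift h"
proof -
  have "(\<lambda>x. f (ecirc x)) = (\<lambda>x. h (ecirc x))"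
    using assms ecirc_in_S1 by blast
  then show ?thesis
    unfolding circle_lift_def by (metis (no_types))
qed

lemma homeo_plusD:
  assumes "homeo_plus f"
  shows "circle_map f" and "inj_on f S1" and "circle_degree f = 1"
proof -
  obtain f' where "homeomorphism S1 S1 f f'"
    using assms homeo_plus_def by blast
  then show "circle_map f" and "inj_on f S1"
    unfolding circle_map_def homeomorphism_def by (auto intro: inj_on_inverseI)
  show "circle_degree f = 1"
    using assms homeo_plus_def by blast
qed

lemma circle_lift_add_of_int:
  assumes "homeo_plus f"
  shows "circle_lift f (x + of_int c) = circle_lift f x + of_int c"
  using is_lift_add_of_int_arg[OF circle_lift_props(1)[OF homeo_plusD(1)[OF assms]]]
    homeo_plusD(3)[OF assms] by simp

text \<open>By injectivity of \<open>f\<close> its lift \<open>F\<close> attains neither \<open>F(0)\<close> nor \<open>F(0) + 1 = F(1)\<close> on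
  \<open>(0,1)\<close>, so the intermediate value theorem confines \<open>F\<close> between them.\<close>
lemma circle_lift_bounds:
  assumes "homeo_plus f" and "0 \<le> x" and "x < 1"
  shows "circle_lift f 0 \<le> circle_lift f x" and "circle_lift f x < circle_lift f 0 + 1"
proof -
  let ?F = "circle_lift f"
  have L: "is_lift f ?F"
    using circle_lift_props(1)[OF homeo_plusD(1)[OF assms(1)]] .
  then have cont: "continuous_on A ?F" for A
    using is_lift_def continuous_on_subset by blast
  have F1: "?F 1 = ?F 0 + 1"
    using circle_lift_add_of_int[OF assms(1), of 0 1] by simp
  have avoids: "?F y \<noteq> ?F 0 + of_int n" if "0 < y" "y < 1" for y n
  proof
    assume "?F y = ?F 0 + of_int n"
    then have "f (ecirc y) = f (ecirc 0)"
      using L unfolding is_lift_def by (metis ecirc_add_of_int)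
    then have "ecirc y = ecirc 0"
      using homeo_plusD(2)[OF assms(1)] by (metis ecirc_in_S1 inj_onD)
    then obtain m :: int where "y = of_int m"
      using ecirc_eq_iff[of y 0] by auto
    with that show False
      by auto
  qed
  show "?F 0 \<le> ?F x"
  proof (rule ccontr)
    assume "\<not> ?F 0 \<le> ?F x"
    moreover from this have "0 < x"
      using assms by (cases "x = 0") auto
    ultimately obtain y where "x \<le> y" "y \<le> 1" "?F y = ?F 0"
      using IVT'[of ?F x "?F 0" 1, OF _ _ _ cont] F1 assms by force
    with avoids[of y 0] F1 \<open>0 < x\<close> show False
      by (cases "y = 1") auto
  qed
  show "?F x < ?F 0 + 1"
  proof (rule ccontr)
    assume "\<not> ?F x < ?F 0 + 1"
    moreover from this have "0 < x"
      using assms by (cases "x = 0") auto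
    ultimately obtain y where "0 \<le> y" "y \<le> x" "?F y = ?F 0 + 1"
      using avoids[of x 1] IVT'[of ?F 0 "?F 0 + 1" x, OF _ _ _ cont] assms by force
    with avoids[of y 1] assms show False
      by (cases "y = 0") auto
  qed
qed

lemma circle_lift_euler_cocycle:
  assumes "homeo_plus f" "homeo_plus g" "homeo_plus h" and "\<And>z. z \<in> S1 \<Longrightarrow> h z = f (g z)"
  shows "circle_lift h (x + of_int (euler_cocycle f g)) = circle_lift f (circle_lift g x)"
proof -
  have lifts: "is_lift f (circle_lift f)" "is_lift g (circle_lift g)" "is_lift h (circle_lift h)"
    using assms(1-3) circle_lift_props(1) homeo_plusD(1) by blast+
  obtain n :: int where n: "\<And>x. circle_lift f (circle_lift g x) = circle_lift h x + of_int n"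
    using is_lift_unique_up_to_int[OF lifts(3) is_lift_comp[OF lifts(1,2) assms(4)]] by blast
  have comp: "circle_lift (f \<circ> g) = circle_lift h"
    using assms(4) by (intro circle_lift_cong) simp
  have "euler_cocycle f g = n"
    unfolding euler_cocycle_def comp
  proof (rule the_equality)
    show "\<forall>x. circle_lift h (x + of_int n) = circle_lift f (circle_lift g x)"
      using n circle_lift_add_of_int[OF assms(3)] by simp
  next
    fix c :: int
    assume "\<forall>x. circle_lift h (x + of_int c) = circle_lift f (circle_lift g x)"
    from this[rule_format, of 0] show "c = n"
      using n[of 0] circle_lift_add_of_int[OF assms(3), of 0 c] by simp
  qed
  then show ?thesis
    using n circle_lift_add_of_int[OF assms(3)] by simp
qed

definition ang :: "complex \<Rightarrow> real" where
  "ang z = Arg2pi z / (2 * pi)"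

lemma ang_bounds: "0 \<le> ang z" "ang z < 1"
  unfolding ang_def using Arg2pi_ge_0[of z] Arg2pi_lt_2pi[of z] by simp_all

lemma ecirc_ang:
  assumes "z \<in> S1"
  shows "ecirc (ang z) = z"
  using assms complex_norm_eq_1_exp[of z] unfolding ang_def ecirc_exp by simp

lemma ang_ecirc:
  assumes "0 \<le> x" and "x < 1"
  shows "ang (ecirc x) = x"
proof -
  have "Arg2pi (ecirc x) = 2 * pi * x"
    by (rule Arg2pi_unique[of 1]) (use assms in \<open>auto simp: ecirc_exp\<close>)
  then show ?thesis
    unfolding ang_def by simp
qed

lemma borel_measurable_ang: "ang \<in> borel_measurable borel"
proof (rule borel_measurableI_greater)
  fix y
  have "{z \<in> space borel. y < ang z} = {z. 2 * pi * y < Arg2pi z}"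
    unfolding ang_def by (auto simp: field_simps)
  then show "{z \<in> space borel. y < ang z} \<in> sets borel"
    using open_Arg2pi2pi_gt by simp
qed

lemma borel_measurable_ang_orbit:
  fixes \<rho> :: "'g::topological_space \<Rightarrow> complex \<Rightarrow> complex"
  assumes "continuous_on (UNIV \<times> S1) (\<lambda>(g, z). \<rho> g z)" and "z \<in> S1"
  shows "(\<lambda>g. ang (\<rho> g z)) \<in> borel_measurable borel"
proof -
  have "continuous_on UNIV (\<lambda>g. (\<lambda>(g, z). \<rho> g z) (g, z))"
    by (rule continuous_on_compose2[OF assms(1)]) (use assms(2) in \<open>auto intro: continuous_intros\<close>)
  then show ?thesis
    using measurable_compose[OF borel_measurable_continuous_onI borel_measurable_ang] by simp
qed

lemma circle_lift_0_eq_ang: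
  assumes "circle_map f"
  shows "circle_lift f 0 = ang (f 1)"
  using circle_lift_props[OF assms] ang_ecirc unfolding is_lift_def by (metis ecirc_0)

lemma circle_lift_eq_ang:
  assumes "homeo_plus f" and "0 \<le> t" and "t < 1"
  shows "circle_lift f t =
    (if ang (f 1) \<le> ang (f (ecirc t)) then ang (f (ecirc t)) else ang (f (ecirc t)) + 1)"
proof -
  have f: "circle_map f"
    using homeo_plusD(1)[OF assms(1)] .
  define a where "a = ang (f (ecirc t))"
  have "ecirc (circle_lift f t) = ecirc a"
    using f circle_lift_props(1)[OF f] ecirc_ang[of "f (ecirc t)"]
    unfolding a_def is_lift_def circle_map_def by (metis ecirc_in_S1 image_subset_iff)
  then obtain m :: int where m: "circle_lift f t = a + of_int m"
    using ecirc_eq_iff by blast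
  have "ang (f 1) \<le> circle_lift f t" "circle_lift f t < ang (f 1) + 1"
    using circle_lift_bounds[OF assms] circle_lift_0_eq_ang[OF f] by auto
  then have "m = (if ang (f 1) \<le> a then 0 else 1)"
    using m ang_bounds[of "f 1"] ang_bounds[of "f (ecirc t)"] unfolding a_def by auto
  then show ?thesis
    using m unfolding a_def by simp
qed

text \<open>When \<open>f\<^sub>0 \<phi> = \<phi> f\<^sub>1\<close>, the canonical lifts satisfy \<open>F\<^sub>0 \<circ> \<Phi> = \<Phi> \<circ> F\<^sub>1 + b\<close> for an
  integer \<open>b\<close>; this reads \<open>b\<close> off at \<open>0\<close>.\<close>
definition semiconj_defect ::
    "(complex \<Rightarrow> complex) \<Rightarrow> (complex \<Rightarrow> complex) \<Rightarrow> (complex \<Rightarrow> complex) \<Rightarrow> int" where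
  "semiconj_defect \<phi> f0 f1 =
    \<lfloor>circle_lift f0 (circle_lift \<phi> 0) - circle_lift \<phi> (circle_lift f1 0)\<rfloor>"

lemma circle_lift_semiconj:
  assumes "circle_map \<phi>" "circle_map f0" "circle_map f1"
    and "\<And>z. z \<in> S1 \<Longrightarrow> f0 (\<phi> z) = \<phi> (f1 z)"
  shows "circle_lift f0 (circle_lift \<phi> x) = circle_lift \<phi> (circle_lift f1 x) + semiconj_defect \<phi> f0 f1"
proof -
  have lifts: "is_lift \<phi> (circle_lift \<phi>)" "is_lift f0 (circle_lift f0)" "is_lift f1 (circle_lift f1)"
    using assms(1-3) circle_lift_props(1) by blast+
  have "is_lift (\<lambda>z. \<phi> (f1 z)) (\<lambda>x. circle_lift \<phi> (circle_lift f1 x))"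
    by (rule is_lift_comp[OF lifts(1,3)]) simp
  moreover have "is_lift (\<lambda>z. \<phi> (f1 z)) (\<lambda>x. circle_lift f0 (circle_lift \<phi> x))"
    by (rule is_lift_comp[OF lifts(2,1)]) (simp add: assms(4))
  ultimately obtain n :: int where
    n: "\<And>x. circle_lift f0 (circle_lift \<phi> x) = circle_lift \<phi> (circle_lift f1 x) + of_int n"
    using is_lift_unique_up_to_int by blast
  then have "semiconj_defect \<phi> f0 f1 = n"
    unfolding semiconj_defect_def by simp
  then show ?thesis
    using n by simp
qed

lemma euler_cocycle_semiconj:
  assumes \<phi>: "circle_map \<phi>"
    and homeo: "homeo_plus f0" "homeo_plus g0" "homeo_plus h0"
      "homeo_plus f1" "homeo_plus g1" "homeo_plus h1"
    and comp: "\<And>z. z \<in> S1 \<Longrightarrow> h0 z = f0 (g0 z)" "\<And>z. z \<in> S1 \<Longrightarrow> h1 z = f1 (g1 z)"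
    and semiconj: "\<And>z. z \<in> S1 \<Longrightarrow> f0 (\<phi> z) = \<phi> (f1 z)"
      "\<And>z. z \<in> S1 \<Longrightarrow> g0 (\<phi> z) = \<phi> (g1 z)"
      "\<And>z. z \<in> S1 \<Longrightarrow> h0 (\<phi> z) = \<phi> (h1 z)"
  shows "euler_cocycle f0 g0 - circle_degree \<phi> * euler_cocycle f1 g1 =
    semiconj_defect \<phi> f0 f1 + semiconj_defect \<phi> g0 g1 - semiconj_defect \<phi> h0 h1"
proof -
  let ?\<Phi> = "circle_lift \<phi>" and ?k = "circle_degree \<phi>"
  let ?c0 = "euler_cocycle f0 g0" and ?c1 = "euler_cocycle f1 g1"
  let ?bf = "semiconj_defect \<phi> f0 f1" and ?bg = "semiconj_defect \<phi> g0 g1"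
    and ?bh = "semiconj_defect \<phi> h0 h1"
  have maps: "circle_map f0" "circle_map g0" "circle_map h0"
    "circle_map f1" "circle_map g1" "circle_map h1"
    using homeo homeo_plusD(1) by auto
  note sf = circle_lift_semiconj[OF \<phi> maps(1,4) semiconj(1)]
  note sg = circle_lift_semiconj[OF \<phi> maps(2,5) semiconj(2)]
  note sh = circle_lift_semiconj[OF \<phi> maps(3,6) semiconj(3)]
  have "circle_lift f0 (circle_lift g0 (?\<Phi> 0)) = circle_lift f0 (?\<Phi> (circle_lift g1 0)) + ?bg"
    using sg circle_lift_add_of_int[OF homeo(1)] by simp
  also have "\<dots> = ?\<Phi> (circle_lift f1 (circle_lift g1 0)) + ?bf + ?bg"
    using sf by simp
  also have "\<dots> = ?\<Phi> (circle_lift h1 (0 + of_int ?c1)) + ?bf + ?bg"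
    using circle_lift_euler_cocycle[OF homeo(4-6) comp(2), of 0] by simp
  also have "\<dots> = ?\<Phi> (circle_lift h1 0) + of_int ?k * of_int ?c1 + ?bf + ?bg"
    using circle_lift_add_of_int[OF homeo(6), of 0] is_lift_add_of_int_arg[OF circle_lift_props(1)[OF \<phi>]]
    by simp
  finally have "circle_lift f0 (circle_lift g0 (?\<Phi> 0)) = ?\<Phi> (circle_lift h1 0) + of_int ?k * of_int ?c1 + ?bf + ?bg" .
  moreover have "circle_lift f0 (circle_lift g0 (?\<Phi> 0)) = ?\<Phi> (circle_lift h1 0) + ?bh + of_int ?c0"
    using circle_lift_euler_cocycle[OF homeo(1-3) comp(1)] circle_lift_add_of_int[OF homeo(3)] sh
    by metis
  ultimately have "real_of_int (?c0 - ?k * ?c1) = real_of_int (?bf + ?bg - ?bh)"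
    by simp
  then show ?thesis
    by (simp only: of_int_eq_iff)
qed

lemma semiconj_defect_bounded:
  assumes "circle_map \<phi>"
  obtains B where "\<And>f0 f1. homeo_plus f0 \<Longrightarrow> circle_map f1 \<Longrightarrow> \<bar>semiconj_defect \<phi> f0 f1\<bar> \<le> B"
proof -
  let ?\<Phi> = "circle_lift \<phi>"
  have "compact (?\<Phi> ` {0..1})"
    using circle_lift_props(1)[OF assms]
    by (intro compact_continuous_image) (auto simp: is_lift_def intro: continuous_on_subset)
  then obtain M where M: "\<And>y. y \<in> {0..1} \<Longrightarrow> \<bar>?\<Phi> y\<bar> \<le> M"
    using compact_imp_bounded bounded_real by (metis imageI)
  have "\<bar>semiconj_defect \<phi> f0 f1\<bar> \<le> \<lceil>M\<rceil> + 3" if "homeo_plus f0" "circle_map f1" for f0 f1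
  proof -
    have "0 \<le> circle_lift f0 (?\<Phi> 0)" "circle_lift f0 (?\<Phi> 0) < 2"
      using circle_lift_bounds[OF that(1)] circle_lift_props(2,3)[OF assms]
        circle_lift_props(2,3)[OF homeo_plusD(1)[OF that(1)]] by force+
    moreover have "\<bar>?\<Phi> (circle_lift f1 0)\<bar> \<le> M"
      using M circle_lift_props(2,3)[OF that(2)] by simp
    ultimately show ?thesis
      unfolding semiconj_defect_def by linarith
  qed
  then show thesis
    using that by blast
qed

lemma borel_measurable_semiconj_defect:
  fixes \<rho>0 \<rho>1 :: "'g::topological_space \<Rightarrow> complex \<Rightarrow> complex"
  assumes "circle_map \<phi>" and "\<And>g. homeo_plus (\<rho>0 g)" and "\<And>g. circle_map (\<rho>1 g)"
    and "continuous_on (UNIV \<times> S1) (\<lambda>(g, z). \<rho>0 g z)"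
    and "continuous_on (UNIV \<times> S1) (\<lambda>(g, z). \<rho>1 g z)"
  shows "(\<lambda>g. real_of_int (semiconj_defect \<phi> (\<rho>0 g) (\<rho>1 g))) \<in> borel_measurable borel"
proof -
  let ?\<Phi> = "circle_lift \<phi>" and ?z = "ecirc (circle_lift \<phi> 0)"
  define F where "F g =
    (if ang (\<rho>0 g 1) \<le> ang (\<rho>0 g ?z) then ang (\<rho>0 g ?z) else ang (\<rho>0 g ?z) + 1)
      - ?\<Phi> (ang (\<rho>1 g 1))" for g
  have "semiconj_defect \<phi> (\<rho>0 g) (\<rho>1 g) = \<lfloor>F g\<rfloor>" for g
    unfolding semiconj_defect_def F_def
    using circle_lift_eq_ang[OF assms(2) circle_lift_props(2,3)[OF assms(1)]]
      circle_lift_0_eq_ang[OF assms(3)] by simp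
  moreover have "F \<in> borel_measurable borel"
  proof -
    have [measurable]: "(\<lambda>g. ang (\<rho>0 g 1)) \<in> borel_measurable borel"
      "(\<lambda>g. ang (\<rho>0 g ?z)) \<in> borel_measurable borel" "(\<lambda>g. ang (\<rho>1 g 1)) \<in> borel_measurable borel"
      using borel_measurable_ang_orbit[OF assms(4), of 1] borel_measurable_ang_orbit[OF assms(4) ecirc_in_S1]
        borel_measurable_ang_orbit[OF assms(5), of 1] by simp_all
    have [measurable]: "?\<Phi> \<in> borel_measurable borel"
      using circle_lift_props(1)[OF assms(1)] borel_measurable_continuous_onI unfolding is_lift_def by blast
    show ?thesis
      unfolding F_def[abs_def] by measurable
  qed
  ultimately show ?thesis
    using measurable_compose[OF _ borel_measurable_real_floor] by simp
qed

theorem lemma4p3: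
  fixes \<rho>0 \<rho>1 :: "'g::{topological_group_add, t2_space, second_countable_topology} \<Rightarrow> complex \<Rightarrow> complex"
    and \<phi> :: "complex \<Rightarrow> complex" and k :: int
  assumes "locally_compact_space (euclidean :: 'g topology)"
    and "cont_action \<rho>0" and "cont_action \<rho>1"
    and "covering_space S1 \<phi> S1" and "circle_degree \<phi> = k"
    and "\<forall>g. \<forall>x\<in>S1. \<rho>0 g (\<phi> x) = \<phi> (\<rho>1 g x)"
  shows "same_bc_class (pullback_euler \<rho>0) (\<lambda>g h. k * pullback_euler \<rho>1 g h)"
proof -
  have \<phi>: "circle_map \<phi>"
    using covering_space_imp_continuous[OF assms(4)] covering_space_imp_surjective[OF assms(4)]
    unfolding circle_map_def by simp
  have homeo: "\<And>g. homeo_plus (\<rho>0 g)" "\<And>g. homeo_plus (\<rho>1 g)"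
    and act: "\<And>g h z. z \<in> S1 \<Longrightarrow> \<rho>0 (g + h) z = \<rho>0 g (\<rho>0 h z)"
      "\<And>g h z. z \<in> S1 \<Longrightarrow> \<rho>1 (g + h) z = \<rho>1 g (\<rho>1 h z)"
    and cont: "continuous_on (UNIV \<times> S1) (\<lambda>(g, z). \<rho>0 g z)"
      "continuous_on (UNIV \<times> S1) (\<lambda>(g, z). \<rho>1 g z)"
    using assms(2,3) unfolding cont_action_def by auto
  define b where "b g = semiconj_defect \<phi> (\<rho>0 g) (\<rho>1 g)" for g
  obtain B where "\<And>g. \<bar>b g\<bar> \<le> B"
    using semiconj_defect_bounded[OF \<phi>] homeo homeo_plusD(1) unfolding b_def by metis
  moreover have "(\<lambda>g. real_of_int (b g)) \<in> borel_measurable borel"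
    unfolding b_def using borel_measurable_semiconj_defect[OF \<phi> homeo(1) _ cont] homeo(2) homeo_plusD(1)
    by blast
  moreover have "pullback_euler \<rho>0 g h - k * pullback_euler \<rho>1 g h = b g + b h - b (g + h)" for g h
    unfolding pullback_euler_def b_def assms(5)[symmetric]
    by (rule euler_cocycle_semiconj[OF \<phi>]) (use homeo act assms(6) in auto)
  ultimately show ?thesis
    unfolding same_bc_class_def bounded_borel_int_def by blast
qed

end
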